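(* In the setting of the adaptive implicit-explicit iteration described in the context, suppose there are $a>0$ and $\eta_{\min}>0$ such that the step size satisfies $0<\eta_{\min}\le\eta\le\frac1{\|\bm T\|+2a}$. Then every limit point $(\bm d_*,\lambda_* )$ of the sequence $\{(\bm d_k,\lambda_k)\}$ is a KKT point of the problem $\min_{\|\bm d\|_2\le r}f(\bm d)$, i.e. it satisfies $\bm g+(\bm H+\lambda_*\bm I)\bm d_*=0$, $\lambda_*\ge0$, $\|\bm d_*\|_2\le r$ and $\lambda_*(\|\bm d_*\|_2-r)=0$.
   Context: Let $n\ge1$, $r>0$, $\bm g\in\mathbb R^n$ with $\bm g\neq0$, and $\bm H=\bm D+\bm T\in\mathbb R^{n\times n}$, where $\bm D$ is diagonal with nonnegative diagonal entries $D_{i,i}$ and $\bm T$ is symmetric; $\|\bm T\|$ is the spectral norm. Let $f(\bm d)=\bm g^\top\bm d+\frac12\bm d^\top\bm H\bm d$. Adaptive implicit-explicit iteration with step size $\eta>0$: set $\bm d_0=-r\bm g/\|\bm g\|_2$ and $\lambda_0=0$. For $k=0,1,2,\dots$ (run indefinitely): let $\bm b_k=\bm d_k-\eta(\bm g+\bm T\bm d_k)$ and $\phi_k(\lambda)=\sum_{i=1}^n\big([\bm b_k]_i/(1+\eta(D_{i,i}+\lambda))\big)^2$; set $\lambda_{k+1}=0$ if $\phi_k(0)\le r^2$, and otherwise let $\lambda_{k+1}>0$ be the solution of $\phi_k(\lambda)=r^2$; then $\bm d_{k+1}=(\bm I+\eta(\bm D+\lambda_{k+1}\bm I))^{-1}\bm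 b_k$. *)

theory Defs
  imports "HOL-Analysis.Analysis"
begin

definition iex_b :: "real \<Rightarrow> real^'n \<Rightarrow> real^'n^'n \<Rightarrow> real^'n \<Rightarrow> real^'n" where
  "iex_b \<eta> g T d = d - \<eta> *\<^sub>R (g + T *v d)"

definition iex_phi :: "real \<Rightarrow> real^'n^'n \<Rightarrow> real^'n \<Rightarrow> real \<Rightarrow> real" where
  "iex_phi \<eta> D b mu = (\<Sum>i\<in>UNIV. (b $ i / (1 + \<eta> * (D $ i $ i + mu)))\<^sup>2)"

end

theory Submission
  imports Defs
begin

(* The iteration treats T explicitly and D and the ball constraint implicitly: d_{k+1} solves
     d_{k+1} - d_k + eta (g + T d_k + D d_{k+1} + lam_{k+1} d_{k+1}) = 0
   with lam_{k+1} >= 0 the multiplier of ||d|| <= r.  Pairing this equation with d_{k+1} - d_k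
   and using eta <= 1/(||T|| + 2a) gives the sufficient decrease
   f(d_{k+1}) <= f(d_k) - a ||d_{k+1} - d_k||^2, so f(d_k) converges and the steps tend to zero.
   Along a convergent subsequence d_k and d_{k+1} therefore share the limit, and the step
   equation becomes stationarity; feasibility and complementarity hold at every iterate and
   survive the limit. *)

lemma diagonal_matrix_vector_mult:
  fixes D :: "'a::semiring_1^'n^'n"
  assumes "\<forall>i j. i \<noteq> j \<longrightarrow> D $ i $ j = 0"
  shows "(D *v x) $ i = D $ i $ i * x $ i"
proof -
  have "(D *v x) $ i = (\<Sum>j\<in>UNIV. D $ i $ j * x $ j)"
    by (simp add: matrix_vector_mult_def)
  also have "\<dots> = D $ i $ i * x $ i"
    using assms by (subst sum.remove[of _ i]) auto
  finally show ?thesis .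
qed

lemma diagonal_matrix_inv_apply:
  fixes M :: "'a::field^'n^'n"
  assumes diag: "\<forall>i j. i \<noteq> j \<longrightarrow> M $ i $ j = 0" and nz: "\<forall>i. M $ i $ i \<noteq> 0"
  shows "(matrix_inv M *v b) $ i = b $ i / M $ i $ i"
proof -
  define N :: "'a^'n^'n" where "N = (\<chi> i j. if i = j then inverse (M $ i $ i) else 0)"
  have "(M ** N) $ i $ j = mat 1 $ i $ j" for i j
  proof -
    have "(M ** N) $ i $ j = (\<Sum>k\<in>UNIV. M $ i $ k * N $ k $ j)"
      by (simp add: matrix_matrix_mult_def)
    also have "\<dots> = M $ i $ i * N $ i $ j"
      using diag by (subst sum.remove[of _ i]) auto
    finally show ?thesis
      using nz by (simp add: N_def mat_def)
  qed
  then have "M ** N = mat 1"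
    by (simp add: vec_eq_iff)
  then have "\<exists>N. M ** N = mat 1 \<and> N ** M = mat 1"
    using matrix_left_right_inverse by blast
  then have "M ** matrix_inv M = mat 1"
    unfolding matrix_inv_def by (rule someI2_ex) blast
  then have "M *v (matrix_inv M *v b) = b"
    by (simp add: matrix_vector_mul_assoc)
  then have "M $ i $ i * (matrix_inv M *v b) $ i = b $ i"
    by (metis diag diagonal_matrix_vector_mult)
  then show ?thesis
    using nz by (simp add: field_simps)
qed

lemma iex_implicit_step:
  fixes D :: "real^'n^'n" and b :: "real^'n"
  assumes diag: "\<forall>i j. i \<noteq> j \<longrightarrow> D $ i $ j = 0" and nonneg: "\<forall>i. D $ i $ i \<ge> 0"
    and "\<eta> > 0" "\<mu> \<ge> 0"
    and y: "y = matrix_inv (mat 1 + \<eta> *\<^sub>R (D + \<mu> *\<^sub>R mat 1)) *v b"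
  shows "(norm y)\<^sup>2 = iex_phi \<eta> D b \<mu>" and "y + \<eta> *\<^sub>R (D *v y + \<mu> *\<^sub>R y) = b"
proof -
  define M where "M = mat 1 + \<eta> *\<^sub>R (D + \<mu> *\<^sub>R mat 1)"
  have M: "M $ i $ j = (if i = j then 1 + \<eta> * (D $ i $ i + \<mu>) else 0)" for i j
    using diag by (simp add: M_def mat_def)
  have pos: "1 + \<eta> * (D $ i $ i + \<mu>) > 0" for i
    using nonneg assms(3,4) by (simp add: add_pos_nonneg)
  have yi: "y $ i = b $ i / (1 + \<eta> * (D $ i $ i + \<mu>))" for i
    using diagonal_matrix_inv_apply[of M b i] M pos y by (simp add: M_def less_imp_neq[symmetric])
  show "(norm y)\<^sup>2 = iex_phi \<eta> D b \<mu>"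
    unfolding power2_norm_eq_inner inner_vec_def iex_phi_def yi by (simp add: power2_eq_square)
  have "y $ i + \<eta> * (D $ i $ i * y $ i + \<mu> * y $ i) = b $ i" for i
  proof -
    have "y $ i + \<eta> * (D $ i $ i * y $ i + \<mu> * y $ i) = y $ i * (1 + \<eta> * (D $ i $ i + \<mu>))"
      by (simp add: algebra_simps)
    also have "\<dots> = b $ i"
      using pos[of i] by (simp add: yi)
    finally show ?thesis .
  qed
  then show "y + \<eta> *\<^sub>R (D *v y + \<mu> *\<^sub>R y) = b"
    by (simp add: vec_eq_iff diagonal_matrix_vector_mult[OF diag])
qed

definition quadratic_objective :: "real^'n \<Rightarrow> real^'n^'n \<Rightarrow> real^'n \<Rightarrow> real" where
  "quadratic_objective g H x = g \<bullet> x + 1/2 * (x \<bullet> (H *v x))"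

lemma symmetric_matrix_inner:
  fixes S :: "real^'n^'n"
  assumes "transpose S = S"
  shows "x \<bullet> (S *v y) = y \<bullet> (S *v x)"
  by (metis assms dot_lmul_matrix inner_commute transpose_matrix_vector)

lemma quadratic_objective_diff:
  fixes D T :: "real^'n^'n"
  assumes "transpose D = D" "transpose T = T"
  shows "quadratic_objective g (D + T) y - quadratic_objective g (D + T) x
       = (y - x) \<bullet> (g + T *v x + D *v y)
         - 1/2 * ((y - x) \<bullet> (D *v (y - x))) + 1/2 * ((y - x) \<bullet> (T *v (y - x)))"
  using symmetric_matrix_inner[OF assms(1), of x y] symmetric_matrix_inner[OF assms(2), of x y]
  by (simp add: quadratic_objective_def matrix_vector_mult_add_rdistrib
      matrix_vector_mult_diff_distrib inner_diff_left inner_diff_right inner_add_right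
      inner_commute algebra_simps)

lemma diagonal_transpose:
  fixes D :: "'a::semiring_1^'n^'n"
  assumes "\<forall>i j. i \<noteq> j \<longrightarrow> D $ i $ j = 0"
  shows "transpose D = D"
  using assms by (simp add: vec_eq_iff transpose_def) metis

lemma diagonal_nonneg_quadratic_form:
  fixes D :: "real^'n^'n"
  assumes "\<forall>i j. i \<noteq> j \<longrightarrow> D $ i $ j = 0" "\<forall>i. D $ i $ i \<ge> 0"
  shows "0 \<le> h \<bullet> (D *v h)"
proof -
  have "h \<bullet> (D *v h) = (\<Sum>i\<in>UNIV. D $ i $ i * (h $ i)\<^sup>2)"
    by (simp add: inner_vec_def diagonal_matrix_vector_mult[OF assms(1)] power2_eq_square ac_simps)
  then show ?thesis
    using assms(2) by (simp add: sum_nonneg)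
qed

lemma quadratic_form_le_onorm:
  fixes T :: "real^'n^'n"
  shows "h \<bullet> (T *v h) \<le> onorm ((*v) T) * (norm h)\<^sup>2"
proof -
  have "h \<bullet> (T *v h) \<le> norm h * norm (T *v h)"
    by (rule norm_cauchy_schwarz)
  also have "\<dots> \<le> norm h * (onorm ((*v) T) * norm h)"
    by (simp add: mult_left_mono onorm[OF matrix_vector_mul_bounded_linear])
  finally show ?thesis
    by (simp add: power2_eq_square ac_simps)
qed

lemma inner_diff_nonneg_if_norm_le:
  fixes x y :: "'a::real_inner"
  assumes "norm x \<le> norm y"
  shows "0 \<le> (y - x) \<bullet> y"
proof -
  have "x \<bullet> y \<le> norm x * norm y"
    by (rule norm_cauchy_schwarz)
  also have "\<dots> \<le> y \<bullet> y"
    using assms by (simp add: mult_right_mono power2_norm_eq_inner[symmetric] power2_eq_square)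
  finally show ?thesis
    by (simp add: inner_diff_left)
qed

lemma implicit_explicit_descent:
  fixes g x y :: "real^'n" and D T :: "real^'n^'n"
  assumes D_diag: "\<forall>i j. i \<noteq> j \<longrightarrow> D $ i $ j = 0" and D_nonneg: "\<forall>i. D $ i $ i \<ge> 0"
    and T_sym: "transpose T = T"
    and eta_pos: "\<eta> > 0" and a_pos: "a > 0" and eta_le: "\<eta> \<le> 1 / (onorm ((*v) T) + 2 * a)"
    and stationary: "y - x + \<eta> *\<^sub>R (g + T *v x + D *v y + \<mu> *\<^sub>R y) = 0"
    and mu_nonneg: "\<mu> \<ge> 0" and active: "\<mu> > 0 \<Longrightarrow> norm y = r" and x_feasible: "norm x \<le> r"
  shows "quadratic_objective g (D + T) y \<le> quadratic_objective g (D + T) x - a * (norm (y - x))\<^sup>2"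
proof -
  define h where "h = y - x"
  define c where "c = onorm ((*v) T)"
  have c_nonneg: "c \<ge> 0"
    by (simp add: c_def onorm_pos_le[OF matrix_vector_mul_bounded_linear])
  have step_bound: "c + 2 * a \<le> 1 / \<eta>"
    using eta_le eta_pos c_nonneg a_pos by (simp add: c_def field_simps)
  have "\<eta> *\<^sub>R (g + T *v x + D *v y + \<mu> *\<^sub>R y) = - h"
    using stationary unfolding h_def by (rule add_eq_0_iff[THEN iffD1])
  then have "g + T *v x + D *v y + \<mu> *\<^sub>R y = (1 / \<eta>) *\<^sub>R (- h)"
    unfolding eq_vector_fraction_iff using eta_pos by simp
  then have "h \<bullet> (g + T *v x + D *v y + \<mu> *\<^sub>R y) = h \<bullet> ((1 / \<eta>) *\<^sub>R (- h))"
    by (rule arg_cong)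
  then have gradient: "h \<bullet> (g + T *v x + D *v y) = - (1 / \<eta>) * (norm h)\<^sup>2 - \<mu> * (h \<bullet> y)"
    by (simp add: inner_add_right power2_norm_eq_inner algebra_simps)
  have "0 \<le> \<mu> * (h \<bullet> y)"
    using mu_nonneg active x_feasible inner_diff_nonneg_if_norm_le[of x y]
    by (cases "\<mu> > 0") (auto simp: h_def)
  moreover have "0 \<le> h \<bullet> (D *v h)"
    using D_diag D_nonneg by (rule diagonal_nonneg_quadratic_form)
  moreover have "h \<bullet> (T *v h) \<le> c * (norm h)\<^sup>2"
    unfolding c_def by (rule quadratic_form_le_onorm)
  moreover have "(c + 2 * a) * (norm h)\<^sup>2 \<le> (1 / \<eta>) * (norm h)\<^sup>2"
    using step_bound by (rule mult_right_mono) simp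
  moreover have "0 \<le> c * (norm h)\<^sup>2" "0 \<le> a * (norm h)\<^sup>2"
    using c_nonneg a_pos by simp_all
  ultimately have "h \<bullet> (g + T *v x + D *v y) - 1/2 * (h \<bullet> (D *v h)) + 1/2 * (h \<bullet> (T *v h))
      \<le> - a * (norm h)\<^sup>2"
    using gradient by (simp add: algebra_simps)
  then show ?thesis
    using quadratic_objective_diff[OF diagonal_transpose[OF D_diag] T_sym, of g y x]
    by (simp add: h_def)
qed

lemma sufficient_decrease_steps_tendsto_zero:
  fixes x :: "nat \<Rightarrow> 'a::real_normed_vector" and F :: "'a \<Rightarrow> real"
  assumes decrease: "\<And>k. F (x (Suc k)) \<le> F (x k) - a * (norm (x (Suc k) - x k))\<^sup>2"
    and a_pos: "a > 0" and s: "strict_mono s" and x_s: "(\<lambda>k. x (s k)) \<longlonglongrightarrow> l"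
    and F_cont: "isCont F l"
  shows "(\<lambda>k. x (Suc k) - x k) \<longlonglongrightarrow> 0"
proof -
  have dec: "decseq (\<lambda>k. F (x k))"
  proof (rule decseq_SucI)
    fix k
    have "0 \<le> a * (norm (x (Suc k) - x k))\<^sup>2"
      using a_pos by simp
    then show "F (x (Suc k)) \<le> F (x k)"
      using decrease[of k] by linarith
  qed
  have "decseq (\<lambda>k. F (x (s k)))"
    using dec s by (simp add: decseq_def strict_mono_less_eq)
  moreover have "(\<lambda>k. F (x (s k))) \<longlonglongrightarrow> F l"
    using F_cont x_s by (rule isCont_tendsto_compose)
  ultimately have "F l \<le> F (x (s k))" for k
    by (rule decseq_ge)
  also have "F (x (s k)) \<le> F (x k)" for k
    using dec seq_suble[OF s] by (simp add: decseq_def)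
  finally obtain L where L: "(\<lambda>k. F (x k)) \<longlonglongrightarrow> L"
    using decseq_convergent[OF dec] by blast
  have gap: "(\<lambda>k. (F (x k) - F (x (Suc k))) / a) \<longlonglongrightarrow> 0"
    using tendsto_divide[OF tendsto_diff[OF L LIMSEQ_Suc[OF L]] tendsto_const, of a] a_pos by simp
  have "(norm (x (Suc k) - x k))\<^sup>2 \<le> (F (x k) - F (x (Suc k))) / a" for k
    using decrease[of k] a_pos by (simp add: pos_le_divide_eq mult.commute)
  then have "(\<lambda>k. (norm (x (Suc k) - x k))\<^sup>2) \<longlonglongrightarrow> 0"
    by (intro tendsto_sandwich[OF _ _ tendsto_const gap]) simp_all
  then have "(\<lambda>k. sqrt ((norm (x (Suc k) - x k))\<^sup>2)) \<longlonglongrightarrow> sqrt 0"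
    by (rule tendsto_real_sqrt)
  then have "(\<lambda>k. norm (x (Suc k) - x k)) \<longlonglongrightarrow> 0"
    by simp
  then show ?thesis
    by (rule tendsto_norm_zero_iff[THEN iffD1])
qed

lemma subseq_predecessors_tendsto:
  fixes x :: "nat \<Rightarrow> 'a::real_normed_vector"
  assumes s: "strict_mono s" and x_s: "(\<lambda>k. x (s k)) \<longlonglongrightarrow> l"
    and steps: "(\<lambda>k. x (Suc k) - x k) \<longlonglongrightarrow> 0"
  obtains t where "strict_mono t" and "\<And>k. Suc (t k) = s (Suc k)" and "(\<lambda>k. x (t k)) \<longlonglongrightarrow> l"
proof
  define t where "t k = s (Suc k) - 1" for k
  have s_pos: "s (Suc k) \<ge> 1" for k
    using seq_suble[OF s, of "Suc k"] by simp
  show t_succ: "Suc (t k) = s (Suc k)" for k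
    using s_pos[of k] by (simp add: t_def)
  show "strict_mono t"
  proof (rule strict_monoI)
    fix m n :: nat
    assume "m < n"
    then have "s (Suc m) < s (Suc n)"
      using s by (simp add: strict_mono_less)
    then show "t m < t n"
      using s_pos[of m] by (simp add: t_def)
  qed
  then have "(\<lambda>k. x (Suc (t k)) - x (t k)) \<longlonglongrightarrow> 0"
    using LIMSEQ_subseq_LIMSEQ[OF steps] by (simp add: o_def)
  moreover have "(\<lambda>k. x (Suc (t k))) \<longlonglongrightarrow> l"
    unfolding t_succ by (rule LIMSEQ_Suc[OF x_s])
  ultimately have "(\<lambda>k. x (Suc (t k)) - (x (Suc (t k)) - x (t k))) \<longlonglongrightarrow> l - 0"
    by (intro tendsto_diff)
  then show "(\<lambda>k. x (t k)) \<longlonglongrightarrow> l"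
    by simp
qed

locale iex_iteration =
  fixes g :: "real^'n" and D T :: "real^'n^'n" and r \<eta> a :: real
    and d :: "nat \<Rightarrow> real^'n" and lam :: "nat \<Rightarrow> real"
  assumes r_pos: "r > 0"
    and D_diag: "\<forall>i j. i \<noteq> j \<longrightarrow> D $ i $ j = 0"
    and D_nonneg: "\<forall>i. D $ i $ i \<ge> 0"
    and T_sym: "transpose T = T"
    and a_pos: "a > 0"
    and eta_pos: "\<eta> > 0"
    and eta_hi: "\<eta> \<le> 1 / (onorm ((*v) T) + 2 * a)"
    and d0_feasible: "norm (d 0) \<le> r"
    and lam0: "lam 0 = 0"
    and lam_zero: "\<And>k. iex_phi \<eta> D (iex_b \<eta> g T (d k)) 0 \<le> r\<^sup>2 \<Longrightarrow> lam (Suc k) = 0"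
    and lam_secular: "\<And>k. iex_phi \<eta> D (iex_b \<eta> g T (d k)) 0 > r\<^sup>2 \<Longrightarrow>
                      lam (Suc k) > 0 \<and> iex_phi \<eta> D (iex_b \<eta> g T (d k)) (lam (Suc k)) = r\<^sup>2"
    and d_step: "\<And>k. d (Suc k) =
                   matrix_inv (mat 1 + \<eta> *\<^sub>R (D + lam (Suc k) *\<^sub>R mat 1)) *v iex_b \<eta> g T (d k)"
begin

lemma lam_nonneg: "0 \<le> lam k"
proof (cases k)
  case (Suc j)
  then show ?thesis
    using lam_zero[of j] lam_secular[of j]
    by (cases "iex_phi \<eta> D (iex_b \<eta> g T (d j)) 0 \<le> r\<^sup>2") auto
qed (simp add: lam0)

lemmas implicit_step = iex_implicit_step[OF D_diag D_nonneg eta_pos lam_nonneg d_step]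

lemma step_feasible: "norm (d (Suc k)) \<le> r"
  and step_active: "0 < lam (Suc k) \<Longrightarrow> norm (d (Suc k)) = r"
proof -
  have "(norm (d (Suc k)))\<^sup>2 \<le> r\<^sup>2 \<and> (0 < lam (Suc k) \<longrightarrow> (norm (d (Suc k)))\<^sup>2 = r\<^sup>2)"
    using lam_zero[of k] lam_secular[of k] implicit_step(1)[of k]
    by (cases "iex_phi \<eta> D (iex_b \<eta> g T (d k)) 0 \<le> r\<^sup>2") auto
  then show "norm (d (Suc k)) \<le> r" and "0 < lam (Suc k) \<Longrightarrow> norm (d (Suc k)) = r"
    using r_pos by (auto simp: power2_le_iff_abs_le power2_eq_iff_nonneg)
qed

lemma feasible: "norm (d k) \<le> r"
  using d0_feasible step_feasible by (cases k) auto

lemma complementary: "lam k * (norm (d k) - r) = 0"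
  using lam0 step_active lam_nonneg[of k] by (cases k) (auto simp: less_le)

lemma stationary:
  "d (Suc k) - d k + \<eta> *\<^sub>R (g + T *v d k + D *v d (Suc k) + lam (Suc k) *\<^sub>R d (Suc k)) = 0"
  using implicit_step(2)[of k] by (simp add: iex_b_def algebra_simps)

lemma sufficient_decrease:
  "quadratic_objective g (D + T) (d (Suc k))
     \<le> quadratic_objective g (D + T) (d k) - a * (norm (d (Suc k) - d k))\<^sup>2"
  using implicit_explicit_descent[OF D_diag D_nonneg T_sym eta_pos a_pos eta_hi stationary
      lam_nonneg step_active feasible] .

lemma limit_point_kkt:
  assumes s: "strict_mono s"
    and d_s: "(\<lambda>k. d (s k)) \<longlonglongrightarrow> ds" and lam_s: "(\<lambda>k. lam (s k)) \<longlonglongrightarrow> ls"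
  shows "g + (D + T) *v ds + ls *\<^sub>R ds = 0 \<and> ls \<ge> 0 \<and> norm ds \<le> r \<and> ls * (norm ds - r) = 0"
proof (intro conjI)
  have "isCont (quadratic_objective g (D + T)) ds"
    unfolding quadratic_objective_def
    by (intro continuous_intros bounded_linear.continuous[OF matrix_vector_mul_bounded_linear])
  then have "(\<lambda>k. d (Suc k) - d k) \<longlonglongrightarrow> 0"
    by (rule sufficient_decrease_steps_tendsto_zero[OF sufficient_decrease a_pos s d_s])
  \<comment> \<open>lam converges only along s, so the step equation is used at the predecessors of s\<close>
  then obtain t where t_succ: "\<And>k. Suc (t k) = s (Suc k)" and d_t: "(\<lambda>k. d (t k)) \<longlonglongrightarrow> ds"
    using subseq_predecessors_tendsto[OF s d_s] by blast
  have "(\<lambda>k. d (Suc (t k)) - d (t k)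
            + \<eta> *\<^sub>R (g + T *v d (t k) + D *v d (Suc (t k)) + lam (Suc (t k)) *\<^sub>R d (Suc (t k))))
        \<longlonglongrightarrow> ds - ds + \<eta> *\<^sub>R (g + T *v ds + D *v ds + ls *\<^sub>R ds)"
    unfolding t_succ
    by (intro tendsto_intros d_t LIMSEQ_Suc[OF d_s] LIMSEQ_Suc[OF lam_s]
        bounded_linear.tendsto[OF matrix_vector_mul_bounded_linear])
  then have "\<eta> *\<^sub>R (g + T *v ds + D *v ds + ls *\<^sub>R ds) = 0"
    unfolding stationary by (simp add: LIMSEQ_const_iff)
  then have "g + T *v ds + D *v ds + ls *\<^sub>R ds = 0"
    using eta_pos by simp
  then show "g + (D + T) *v ds + ls *\<^sub>R ds = 0"
    by (simp add: matrix_vector_mult_add_rdistrib algebra_simps)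
  show "ls \<ge> 0"
    using lam_s lam_nonneg by (blast intro: LIMSEQ_le_const)
  show "norm ds \<le> r"
    using feasible by (intro LIMSEQ_le_const2[OF tendsto_norm[OF d_s]]) blast
  have "(\<lambda>k. lam (s k) * (norm (d (s k)) - r)) \<longlonglongrightarrow> ls * (norm ds - r)"
    by (intro tendsto_intros lam_s d_s)
  then show "ls * (norm ds - r) = 0"
    unfolding complementary by (simp add: LIMSEQ_const_iff)
qed

end

theorem mainTheorem7:
  fixes g :: "real^'n" and D T :: "real^'n^'n" and r \<eta> a \<eta>min :: real
    and d :: "nat \<Rightarrow> real^'n" and lam :: "nat \<Rightarrow> real"
    and ds :: "real^'n" and ls :: real
  assumes r_pos: "r > 0"
    and g_nz: "g \<noteq> 0"
    and D_diag: "\<forall>i j. i \<noteq> j \<longrightarrow> D $ i $ j = 0"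
    and D_nonneg: "\<forall>i. D $ i $ i \<ge> 0"
    and T_sym: "transpose T = T"
    and a_pos: "a > 0"
    and etamin_pos: "\<eta>min > 0"
    and eta_lo: "\<eta>min \<le> \<eta>"
    and eta_hi: "\<eta> \<le> 1 / (onorm (\<lambda>x. T *v x) + 2 * a)"
    and d0: "d 0 = - (r / norm g) *\<^sub>R g"
    and lam0: "lam 0 = 0"
    and lam_step0: "\<forall>k. iex_phi \<eta> D (iex_b \<eta> g T (d k)) 0 \<le> r\<^sup>2 \<longrightarrow> lam (Suc k) = 0"
    and lam_step1: "\<forall>k. iex_phi \<eta> D (iex_b \<eta> g T (d k)) 0 > r\<^sup>2 \<longrightarrow>
                      lam (Suc k) > 0 \<and> iex_phi \<eta> D (iex_b \<eta> g T (d k)) (lam (Suc k)) = r\<^sup>2"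
    and d_step: "\<forall>k. d (Suc k) =
                   matrix_inv (mat 1 + \<eta> *\<^sub>R (D + lam (Suc k) *\<^sub>R mat 1)) *v iex_b \<eta> g T (d k)"
    and limpt: "\<exists>s. strict_mono s \<and> ((\<lambda>k. (d (s k), lam (s k))) \<longlongrightarrow> (ds, ls)) sequentially"
  shows "g + (D + T) *v ds + ls *\<^sub>R ds = 0 \<and> ls \<ge> 0 \<and> norm ds \<le> r \<and> ls * (norm ds - r) = 0"
proof -
  obtain s where s: "strict_mono s"
    and lim: "((\<lambda>k. (d (s k), lam (s k))) \<longlongrightarrow> (ds, ls)) sequentially"
    using limpt by blast
  have "\<eta> > 0"
    using etamin_pos eta_lo by linarith
  moreover have "norm (d 0) \<le> r"
    using d0 g_nz r_pos by simp
  ultimately interpret iex_iteration g D T r \<eta> a d lam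
    using assms by unfold_locales auto
  show ?thesis
    using limit_point_kkt[OF s] tendsto_fst[OF lim] tendsto_snd[OF lim] by simp
qed

end
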